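(* Let $\Phi$ be a real, additive gain graph of order $n$, let $d<n-1$, and let $Q_1,\dots,Q_n\in\mathbb{E}^d$ affinely span $\mathbb{E}^d$ (with $Q_i\neq Q_j$ whenever $i,j$ are adjacent). Then there exist affinely independent points $Q'_1,\dots,Q'_n\in\mathbb{E}^{n-1}$ and a $d$-flat $t$ of $\mathbb{E}^{n-1}$, with $\mathbb{E}^d$ identified isometrically with $t$, such that $\mathcal{H}(\Phi;\mathbf{Q})=\mathcal{H}(\Phi;\mathbf{Q}')^t$.
   Context: A real, additive gain graph $\Phi$ on $\{1,\dots,n\}$: finite graph (multiple edges allowed, every edge with two distinct endpoints) with gains $\phi(e;i,j)\in\mathbb{R}$, $\phi(e;j,i)=-\phi(e;i,j)$. With $\psi_{ij}(P)=d(P,Q_i)^2-d(P,Q_j)^2$, $\mathcal{H}(\Phi;\mathbf{Q})$ consists of the hyperplanes $h(e)=\{P:\psi_{ij}(P)=\phi(e;i,j)\}$ (in the Euclidean space containing the reference points), one per edge $e$ with endpoints $i,j$. For an arrangement $\mathcal{H}$ and affine flat $t$, $\mathcal{H}^t=\{h\cap t:h\in\mathcal{H},\ h\not\supseteq t,\ h\cap t\neq\emptyset\}$. *)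

theory Defs
  imports "HOL-Analysis.Analysis"
begin

text \<open>A real additive gain graph on vertices {1..n}: a finite set E of edges
(of an arbitrary edge type, so multiple edges are allowed); each edge e has an
ordered pair of distinct endpoints ends e = (i,j), and gain phi e = phi(e;i,j).
The gain for the reverse orientation is implicitly -phi e (additive gains).\<close>
definition gain_graph :: "nat \<Rightarrow> 'e set \<Rightarrow> ('e \<Rightarrow> nat \<times> nat) \<Rightarrow> bool" where
  "gain_graph n E ends \<longleftrightarrow> finite E \<and>
     (\<forall>e\<in>E. fst (ends e) \<in> {1..n} \<and> snd (ends e) \<in> {1..n} \<and> fst (ends e) \<noteq> snd (ends e))"

definition adjacent :: "'e set \<Rightarrow> ('e \<Rightarrow> nat \<times> nat) \<Rightarrow> nat \<Rightarrow> nat \<Rightarrow> bool" where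
  "adjacent E ends i j \<longleftrightarrow> (\<exists>e\<in>E. ends e = (i, j) \<or> ends e = (j, i))"

definition psi :: "(nat \<Rightarrow> 'a::real_normed_vector) \<Rightarrow> nat \<Rightarrow> nat \<Rightarrow> 'a \<Rightarrow> real" where
  "psi Q i j P = (dist P (Q i))\<^sup>2 - (dist P (Q j))\<^sup>2"

definition gain_hyperplane ::
    "('e \<Rightarrow> nat \<times> nat) \<Rightarrow> ('e \<Rightarrow> real) \<Rightarrow> (nat \<Rightarrow> 'a::real_normed_vector) \<Rightarrow> 'e \<Rightarrow> 'a set" where
  "gain_hyperplane ends phi Q e = {P. psi Q (fst (ends e)) (snd (ends e)) P = phi e}"

definition gain_arrangement ::
    "'e set \<Rightarrow> ('e \<Rightarrow> nat \<times> nat) \<Rightarrow> ('e \<Rightarrow> real) \<Rightarrow> (nat \<Rightarrow> 'a::real_normed_vector) \<Rightarrow> 'a set set" where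
  "gain_arrangement E ends phi Q = gain_hyperplane ends phi Q ` E"

definition restrict_arr :: "'a set set \<Rightarrow> 'a set \<Rightarrow> 'a set set" where
  "restrict_arr H t = {h \<inter> t | h. h \<in> H \<and> \<not> t \<subseteq> h \<and> h \<inter> t \<noteq> {}}"

end

theory Submission
  imports Defs
begin

text \<open>The function \<open>\<psi>\<^sub>i\<^sub>j\<close> only sees squared distances, so it does not change when
\<open>E\<^sup>d\<close> is embedded isometrically as a coordinate flat \<open>t\<close> of \<open>E\<^sup>n\<^sup>-\<^sup>1\<close> and every \<open>Q\<^sub>i\<close> is
pushed off \<open>t\<close> by a unit vector orthogonal to \<open>t\<close>: all squared distances from points of \<open>t\<close>
grow by exactly 1. Hence each hyperplane of \<open>H(\<Phi>; Q')\<close> cuts \<open>t\<close> in the image of the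
corresponding hyperplane of \<open>H(\<Phi>; Q)\<close>, and it does so properly because \<open>\<psi>\<^sub>i\<^sub>j\<close> is a
non-constant affine function when \<open>Q\<^sub>i \<noteq> Q\<^sub>j\<close>. To make the lifted points affinely
independent, choose an affine basis \<open>B\<close> among the \<open>Q\<^sub>i\<close>, push the remaining \<open>n - 1 - d\<close> points
along distinct coordinate directions orthogonal to \<open>t\<close>, and all points of \<open>B\<close> along the
opposite of one of these directions.\<close>

lemma psi_eq_affine:
  fixes Q :: "nat \<Rightarrow> 'a::euclidean_space"
  shows "psi Q i j x = 2 * (x \<bullet> (Q j - Q i)) + Q i \<bullet> Q i - Q j \<bullet> Q j"
  by (simp add: psi_def dist_norm power2_norm_eq_inner inner_diff_left inner_diff_right
      inner_commute algebra_simps)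

lemma surj_psi:
  fixes Q :: "nat \<Rightarrow> 'a::euclidean_space"
  assumes "Q i \<noteq> Q j"
  shows "surj (psi Q i j)"
proof (rule surjI)
  fix c
  let ?v = "Q j - Q i"
  define s where "s = (c - (Q i \<bullet> Q i - Q j \<bullet> Q j)) / (2 * (?v \<bullet> ?v))"
  have "?v \<bullet> ?v \<noteq> 0" using assms by simp
  then have "2 * s * (?v \<bullet> ?v) + (Q i \<bullet> Q i - Q j \<bullet> Q j) = c"
    by (simp add: s_def field_simps)
  then show "psi Q i j (s *\<^sub>R ?v) = c"
    by (simp add: psi_eq_affine)
qed

lemma gain_arrangement_image_eq_restrict_arr:
  fixes Q :: "nat \<Rightarrow> 'a::euclidean_space" and Q' :: "nat \<Rightarrow> 'b::real_normed_vector"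
  assumes psi_f: "\<And>e x. e \<in> E \<Longrightarrow>
      psi Q' (fst (ends e)) (snd (ends e)) (f x) = psi Q (fst (ends e)) (snd (ends e)) x"
    and distinct: "\<And>e. e \<in> E \<Longrightarrow> Q (fst (ends e)) \<noteq> Q (snd (ends e))"
  shows "(\<lambda>h. f ` h) ` gain_arrangement E ends phi Q
           = restrict_arr (gain_arrangement E ends phi Q') (range f)"
proof -
  have restrict: "gain_hyperplane ends phi Q' e \<inter> range f = f ` gain_hyperplane ends phi Q e"
    if "e \<in> E" for e
    using psi_f[OF that] by (auto simp: gain_hyperplane_def)
  have proper: "gain_hyperplane ends phi Q' e \<inter> range f \<noteq> {} \<and>
      \<not> range f \<subseteq> gain_hyperplane ends phi Q' e" if "e \<in> E" for e
  proof -
    have surj: "surj (psi Q (fst (ends e)) (snd (ends e)))"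
      using surj_psi[OF distinct[OF that]] .
    then obtain x where "psi Q (fst (ends e)) (snd (ends e)) x = phi e"
      by (metis surjD)
    moreover obtain x' where "psi Q (fst (ends e)) (snd (ends e)) x' = phi e + 1"
      using surj by (metis surjD)
    ultimately have "f x \<in> gain_hyperplane ends phi Q' e" "f x' \<notin> gain_hyperplane ends phi Q' e"
      using psi_f[OF that] by (auto simp: gain_hyperplane_def)
    then show ?thesis by blast
  qed
  show ?thesis
    unfolding gain_arrangement_def restrict_arr_def
  proof (intro set_eqI iffI)
    fix y assume "y \<in> (\<lambda>h. f ` h) ` gain_hyperplane ends phi Q ` E"
    then obtain e where e: "e \<in> E" "y = f ` gain_hyperplane ends phi Q e" by blast
    then have "y = gain_hyperplane ends phi Q' e \<inter> range f" using restrict by blast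
    then show "y \<in> {h \<inter> range f |h. h \<in> gain_hyperplane ends phi Q' ` E \<and>
        \<not> range f \<subseteq> h \<and> h \<inter> range f \<noteq> {}}"
      using e(1) proper[OF e(1)] by blast
  next
    fix y assume "y \<in> {h \<inter> range f |h. h \<in> gain_hyperplane ends phi Q' ` E \<and>
        \<not> range f \<subseteq> h \<and> h \<inter> range f \<noteq> {}}"
    then obtain e where e: "e \<in> E" "y = gain_hyperplane ends phi Q' e \<inter> range f" by blast
    then show "y \<in> (\<lambda>h. f ` h) ` gain_hyperplane ends phi Q ` E"
      using restrict[OF e(1)] by blast
  qed
qed

lemma dist_orthogonal_lift_sq:
  fixes f :: "'a::real_normed_vector \<Rightarrow> 'b::real_inner"
  assumes "linear f" "\<And>x. norm (f x) = norm x" "\<And>x. f x \<bullet> v = 0"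
  shows "(dist (f x) (f q + v))\<^sup>2 = (dist x q)\<^sup>2 + (norm v)\<^sup>2"
proof -
  have "f x - (f q + v) = f (x - q) - v" using assms(1) by (simp add: linear_diff)
  then have "(dist (f x) (f q + v))\<^sup>2 = (f (x - q) - v) \<bullet> (f (x - q) - v)"
    by (simp only: dist_norm power2_norm_eq_inner)
  also have "\<dots> = (norm (f (x - q)))\<^sup>2 + (norm v)\<^sup>2"
    using assms(3)[of "x - q"]
    by (simp add: power2_norm_eq_inner inner_diff_left inner_diff_right inner_commute)
  finally show ?thesis using assms(2) by (simp add: dist_norm)
qed

lemma psi_orthogonal_lift:
  fixes f :: "'a::real_normed_vector \<Rightarrow> 'b::real_inner"
  assumes "linear f" "\<And>x. norm (f x) = norm x" "\<And>x k. f x \<bullet> w k = 0"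
    and "norm (w i) = norm (w j)"
  shows "psi (\<lambda>k. f (Q k) + w k) i j (f x) = psi Q i j x"
  using assms by (simp add: psi_def dist_orthogonal_lift_sq)

definition affinely_independent_family :: "'i set \<Rightarrow> ('i \<Rightarrow> 'a::real_vector) \<Rightarrow> bool" where
  "affinely_independent_family I P \<longleftrightarrow>
     (\<forall>u. sum u I = 0 \<and> (\<Sum>i\<in>I. u i *\<^sub>R P i) = 0 \<longrightarrow> (\<forall>i\<in>I. u i = 0))"

lemma affinely_independent_family_imp_inj_on:
  assumes "finite I" "affinely_independent_family I P"
  shows "inj_on P I"
proof (rule inj_onI, rule ccontr)
  fix i j assume ij: "i \<in> I" "j \<in> I" "P i = P j" "i \<noteq> j"
  define u where "u k = (if k = i then 1 else 0) - (if k = j then 1 else (0::real))" for k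
  have "sum u I = 0" using ij assms(1) by (simp add: u_def sum_subtractf)
  moreover have "(\<Sum>k\<in>I. u k *\<^sub>R P k) = 0"
  proof -
    have "(\<Sum>k\<in>I. u k *\<^sub>R P k) = (\<Sum>k\<in>I. (if k = i then P i else 0) - (if k = j then P j else 0))"
      by (rule sum.cong) (auto simp: u_def)
    also have "\<dots> = 0" using ij assms(1) by (simp add: sum_subtractf)
    finally show ?thesis .
  qed
  ultimately have "u i = 0" using assms(2) ij(1) unfolding affinely_independent_family_def by blast
  then show False using ij by (simp add: u_def)
qed

lemma affinely_independent_family_iff:
  assumes "finite I"
  shows "affinely_independent_family I P \<longleftrightarrow> inj_on P I \<and> \<not> affine_dependent (P ` I)"
proof
  assume indep: "affinely_independent_family I P"
  have inj: "inj_on P I" using affinely_independent_family_imp_inj_on[OF assms indep] .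
  have "\<not> affine_dependent (P ` I)"
  proof
    assume "affine_dependent (P ` I)"
    then obtain U where U: "sum U (P ` I) = 0" "\<exists>v\<in>P ` I. U v \<noteq> 0"
        "(\<Sum>v\<in>P ` I. U v *\<^sub>R v) = 0"
      using affine_dependent_explicit_finite[of "P ` I"] assms by auto
    have "sum (U \<circ> P) I = 0" "(\<Sum>i\<in>I. (U \<circ> P) i *\<^sub>R P i) = 0"
      using U(1,3) sum.reindex[OF inj, of U] sum.reindex[OF inj, of "\<lambda>v. U v *\<^sub>R v"] by simp_all
    then have "\<forall>i\<in>I. U (P i) = 0" using indep unfolding affinely_independent_family_def by auto
    then show False using U(2) by auto
  qed
  then show "inj_on P I \<and> \<not> affine_dependent (P ` I)" using inj by blast
next
  assume "inj_on P I \<and> \<not> affine_dependent (P ` I)"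
  then have inj: "inj_on P I" and indep: "\<not> affine_dependent (P ` I)" by blast+
  show "affinely_independent_family I P"
    unfolding affinely_independent_family_def
  proof (intro allI impI)
    fix u assume u: "sum u I = 0 \<and> (\<Sum>i\<in>I. u i *\<^sub>R P i) = 0"
    define U where "U v = u (inv_into I P v)" for v
    have UP: "\<And>i. i \<in> I \<Longrightarrow> U (P i) = u i" using inj by (simp add: U_def inv_into_f_f)
    have "sum U (P ` I) = 0" "(\<Sum>v\<in>P ` I. U v *\<^sub>R v) = 0"
      using u sum.reindex[OF inj, of U] sum.reindex[OF inj, of "\<lambda>v. U v *\<^sub>R v"] UP by simp_all
    then have "\<forall>v\<in>P ` I. U v = 0"
      using indep affine_dependent_explicit_finite[of "P ` I"] assms by auto
    then show "\<forall>i\<in>I. u i = 0" using UP by auto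
  qed
qed

lemma affinely_independent_family_add_orthogonal:
  fixes p w :: "'i \<Rightarrow> 'a::real_inner"
  assumes orth: "\<And>i j. i \<in> I \<Longrightarrow> j \<in> I \<Longrightarrow> p i \<bullet> w j = 0"
    and joint: "\<And>u. sum u I = 0 \<Longrightarrow> (\<Sum>i\<in>I. u i *\<^sub>R p i) = 0 \<Longrightarrow>
        (\<Sum>i\<in>I. u i *\<^sub>R w i) = 0 \<Longrightarrow> \<forall>i\<in>I. u i = 0"
  shows "affinely_independent_family I (\<lambda>i. p i + w i)"
  unfolding affinely_independent_family_def
proof (intro allI impI)
  fix u assume u: "sum u I = 0 \<and> (\<Sum>i\<in>I. u i *\<^sub>R (p i + w i)) = 0"
  define x where "x = (\<Sum>i\<in>I. u i *\<^sub>R p i)"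
  define y where "y = (\<Sum>i\<in>I. u i *\<^sub>R w i)"
  have sum0: "x + y = 0" using u by (simp add: x_def y_def scaleR_add_right sum.distrib)
  have inner0: "(\<Sum>i\<in>I. u i * (p i \<bullet> w j)) = 0" if "j \<in> I" for j
    using orth[OF _ that] by (simp add: sum.neutral)
  have "x \<bullet> y = (\<Sum>j\<in>I. u j * (\<Sum>i\<in>I. u i * (p i \<bullet> w j)))"
    by (simp add: x_def y_def inner_sum_left inner_sum_right)
  also have "\<dots> = 0" using inner0 by (simp add: sum.neutral)
  finally have "x \<bullet> y = 0" .
  then have "x \<bullet> x = 0" using sum0 by (metis add_eq_0_iff inner_minus_right neg_equal_0_iff_equal)
  then have "x = 0" "y = 0" using sum0 by simp_all
  then show "\<forall>i\<in>I. u i = 0" using joint u unfolding x_def y_def by blast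
qed

lemma sum_scaleR_Basis_eq_0_imp:
  fixes \<sigma> :: "'i \<Rightarrow> 'a::euclidean_space"
  assumes "finite R" "inj_on \<sigma> R" "\<sigma> ` R \<subseteq> Basis" "(\<Sum>i\<in>R. c i *\<^sub>R \<sigma> i) = 0" "k \<in> R"
  shows "c k = 0"
proof -
  have "0 = (\<Sum>i\<in>R. c i *\<^sub>R \<sigma> i) \<bullet> \<sigma> k" using assms(4) by simp
  also have "\<dots> = (\<Sum>i\<in>R. if i = k then c i else 0)"
    unfolding inner_sum_left
  proof (rule sum.cong)
    fix i assume i: "i \<in> R"
    have "\<sigma> i \<in> Basis" "\<sigma> k \<in> Basis" using i assms(3,5) by auto
    moreover have "\<sigma> i = \<sigma> k \<longleftrightarrow> i = k" using i assms(2,5) by (simp add: inj_on_eq_iff)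
    ultimately show "(c i *\<^sub>R \<sigma> i) \<bullet> \<sigma> k = (if i = k then c i else 0)"
      by (simp add: inner_Basis)
  qed simp
  also have "\<dots> = c k" using assms(1,5) by simp
  finally show ?thesis by simp
qed

lemma coordinate_lift_kernel:
  fixes \<sigma> :: "'i \<Rightarrow> 'a::euclidean_space"
  assumes "finite B" "finite R" "B \<inter> R = {}" "i0 \<in> R" "inj_on \<sigma> R" "\<sigma> ` R \<subseteq> Basis"
    and sum0: "sum u (B \<union> R) = 0"
    and comb0: "(\<Sum>i\<in>B \<union> R. u i *\<^sub>R (if i \<in> R then \<sigma> i else - \<sigma> i0)) = 0"
  shows "(\<forall>i\<in>R. u i = 0) \<and> sum u B = 0"
proof -
  define c where "c i = u i - (if i = i0 then sum u B else 0)" for i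
  have "(\<Sum>i\<in>B \<union> R. u i *\<^sub>R (if i \<in> R then \<sigma> i else - \<sigma> i0))
      = (\<Sum>i\<in>B. u i *\<^sub>R (- \<sigma> i0)) + (\<Sum>i\<in>R. u i *\<^sub>R \<sigma> i)"
    using assms(1-3) by (simp add: sum.union_disjoint disjoint_iff)
  also have "\<dots> = (\<Sum>i\<in>R. u i *\<^sub>R \<sigma> i) - sum u B *\<^sub>R \<sigma> i0"
    by (simp add: scaleR_sum_left sum_negf)
  also have "\<dots> = (\<Sum>i\<in>R. u i *\<^sub>R \<sigma> i - (if i = i0 then sum u B *\<^sub>R \<sigma> i0 else 0))"
    using assms(2,4) by (simp add: sum_subtractf)
  also have "\<dots> = (\<Sum>i\<in>R. c i *\<^sub>R \<sigma> i)"
    by (rule sum.cong) (auto simp: c_def scaleR_diff_left)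
  finally have "(\<Sum>i\<in>R. c i *\<^sub>R \<sigma> i) = 0" using comb0 by simp
  then have c0: "\<And>i. i \<in> R \<Longrightarrow> c i = 0"
    using sum_scaleR_Basis_eq_0_imp[OF assms(2,5,6)] by blast
  have ui0: "u i0 = sum u B" using c0[OF assms(4)] by (simp add: c_def)
  have others: "u i = 0" if "i \<in> R - {i0}" for i using c0[of i] that by (simp add: c_def)
  have "sum u R = u i0"
    using sum.remove[OF assms(2,4), of u] sum.neutral[of "R - {i0}" u] others by simp
  moreover have "sum u B + sum u R = 0"
    using sum0 sum.union_disjoint[OF assms(1-3), of u] by simp
  ultimately have "sum u B = 0" using ui0 by simp
  then show ?thesis using others ui0 by (metis Diff_iff empty_iff insert_iff)
qed

lemma affinely_independent_family_coordinate_lift: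
  fixes p \<sigma> :: "'i \<Rightarrow> 'a::euclidean_space"
  assumes "finite I" "B \<subseteq> I" "i0 \<in> I - B" "inj_on \<sigma> (I - B)" "\<sigma> ` (I - B) \<subseteq> Basis"
    and indep: "affinely_independent_family B p"
    and orth: "\<And>i j. i \<in> I \<Longrightarrow> j \<in> I - B \<Longrightarrow> p i \<bullet> \<sigma> j = 0"
  shows "affinely_independent_family I (\<lambda>i. p i + (if i \<in> I - B then \<sigma> i else - \<sigma> i0))"
proof (rule affinely_independent_family_add_orthogonal)
  show "p i \<bullet> (if j \<in> I - B then \<sigma> j else - \<sigma> i0) = 0" if "i \<in> I" "j \<in> I" for i j
    using orth[OF that(1)] assms(3) by simp
next
  fix u assume sum0: "sum u I = 0" and p0: "(\<Sum>i\<in>I. u i *\<^sub>R p i) = 0"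
    and w0: "(\<Sum>i\<in>I. u i *\<^sub>R (if i \<in> I - B then \<sigma> i else - \<sigma> i0)) = 0"
  have finB: "finite B" and disj: "B \<inter> (I - B) = {}" using assms(1,2) finite_subset by auto
  have I: "B \<union> (I - B) = I" using assms(2) by blast
  have R0: "\<forall>i\<in>I - B. u i = 0" and sumB: "sum u B = 0"
    using coordinate_lift_kernel[OF finB finite_Diff[OF assms(1)] disj assms(3-5),
        unfolded I, OF sum0 w0] by blast+
  have "(\<Sum>i\<in>B. u i *\<^sub>R p i) + (\<Sum>i\<in>I - B. u i *\<^sub>R p i) = 0"
    using p0 sum.union_disjoint[OF finB finite_Diff[OF assms(1)] disj, of "\<lambda>i. u i *\<^sub>R p i",
        unfolded I] by simp
  then have "(\<Sum>i\<in>B. u i *\<^sub>R p i) = 0" using R0 by simp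
  then have "\<forall>i\<in>B. u i = 0" using sumB indep unfolding affinely_independent_family_def by blast
  then show "\<forall>i\<in>I. u i = 0" using R0 by blast
qed

lemma inner_span_Basis_diff_eq_0:
  fixes S :: "'a::euclidean_space set"
  assumes "S \<subseteq> Basis" "y \<in> span S" "b \<in> Basis - S"
  shows "y \<bullet> b = 0"
proof -
  have "orthogonal b y"
    using assms by (intro orthogonal_to_span[OF assms(2)]) (auto simp: orthogonal_def inner_Basis)
  then show ?thesis by (simp add: orthogonal_def inner_commute)
qed

lemma exists_affinely_independent_subfamily:
  fixes p :: "'i \<Rightarrow> 'a::euclidean_space"
  assumes "finite I"
  obtains B where "B \<subseteq> I" "affinely_independent_family B p" "int (card B) = aff_dim (p ` I) + 1"
proof -
  obtain Bp where Bp: "Bp \<subseteq> p ` I" "\<not> affine_dependent Bp" "affine hull (p ` I) = affine hull Bp"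
    using affine_basis_exists by blast
  obtain B where B: "B \<subseteq> I" "inj_on p B" "Bp = p ` B" using Bp(1) subset_image_inj by metis
  have "affinely_independent_family B p"
    using affinely_independent_family_iff[OF finite_subset[OF B(1) assms]] B(2,3) Bp(2) by blast
  moreover have "aff_dim Bp = aff_dim (p ` I)" by (metis Bp(3) aff_dim_affine_hull)
  then have "int (card B) = aff_dim (p ` I) + 1"
    using aff_dim_affine_independent[OF Bp(2)] card_image[OF B(2)] B(3) by simp
  ultimately show ?thesis using that B(1) by blast
qed

lemma exists_affinely_independent_orthogonal_lift:
  fixes p :: "'i \<Rightarrow> 'a::euclidean_space"
  assumes "finite I" "card I = DIM('a) + 1" "S \<subseteq> Basis" "card S < DIM('a)"
    and p: "p ` I \<subseteq> span S" "aff_dim (p ` I) = int (card S)"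
  obtains w where "\<And>i. norm (w i) = 1" "\<And>i y. y \<in> span S \<Longrightarrow> y \<bullet> w i = 0"
    "affinely_independent_family I (\<lambda>i. p i + w i)"
proof -
  obtain B where B: "B \<subseteq> I" "affinely_independent_family B p" "int (card B) = aff_dim (p ` I) + 1"
    using exists_affinely_independent_subfamily[OF assms(1)] .
  then have card_B: "card B = card S + 1" using p(2) by simp
  have card_compl: "card (Basis - S) = DIM('a) - card S"
    using card_Diff_subset[OF finite_subset[OF assms(3) finite_Basis] assms(3)] by simp
  then have "card (I - B) = card (Basis - S)"
    using card_Diff_subset[OF finite_subset[OF B(1) assms(1)] B(1)] assms(2) card_B by simp
  then obtain \<sigma> where \<sigma>: "bij_betw \<sigma> (I - B) (Basis - S)"
    using finite_same_card_bij[OF finite_Diff[OF assms(1)] finite_Diff[OF finite_Basis]] by blast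
  have "card (I - B) \<noteq> 0" using \<open>card (I - B) = card (Basis - S)\<close> card_compl assms(4) by simp
  then obtain i0 where i0: "i0 \<in> I - B" by (metis card.empty ex_in_conv)
  have \<sigma>_into: "\<sigma> j \<in> Basis - S" if "j \<in> I - B" for j using \<sigma> that bij_betwE by blast
  have orth: "y \<bullet> \<sigma> j = 0" if "y \<in> span S" "j \<in> I - B" for y j
    using inner_span_Basis_diff_eq_0[OF assms(3) that(1) \<sigma>_into[OF that(2)]] .
  define w where "w i = (if i \<in> I - B then \<sigma> i else - \<sigma> i0)" for i
  show ?thesis
  proof
    show "norm (w i) = 1" for i using \<sigma>_into i0 by (auto simp: w_def)
    show "y \<bullet> w i = 0" if "y \<in> span S" for i y using orth[OF that] i0 by (simp add: w_def)
    have "inj_on \<sigma> (I - B)" "\<sigma> ` (I - B) \<subseteq> Basis"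
      using \<sigma> \<sigma>_into by (auto simp: bij_betw_def)
    moreover have "p i \<bullet> \<sigma> j = 0" if "i \<in> I" "j \<in> I - B" for i j
      using orth[OF _ that(2)] p(1) that(1) by blast
    ultimately show "affinely_independent_family I (\<lambda>i. p i + w i)"
      unfolding w_def by (rule affinely_independent_family_coordinate_lift[OF assms(1) B(1) i0 _ _ B(2)])
  qed
qed

lemma isometry_onto_coordinate_subspace:
  assumes "DIM('a) \<le> DIM('b)"
  obtains f :: "'a::euclidean_space \<Rightarrow> 'b::euclidean_space" and S where "S \<subseteq> Basis" "card S = DIM('a)"
    "linear f" "range f = span S" "\<And>x. norm (f x) = norm x"
proof -
  obtain S :: "'b set" where S: "S \<subseteq> Basis" "card S = DIM('a)"
    by (rule obtain_subset_with_card_n[of "DIM('a)" "Basis :: 'b set"]) (use assms in simp_all)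
  have "independent S" using independent_mono[OF independent_Basis S(1)] .
  then have dim_eq: "dim (UNIV :: 'a set) = dim (span S)" using S(2) by (simp add: dim_eq_card_independent)
  obtain f :: "'a \<Rightarrow> 'b" where f: "linear f" "range f = span S" "\<And>x. x \<in> UNIV \<Longrightarrow> norm (f x) = norm x"
    using isometry_subspaces[OF subspace_UNIV subspace_span dim_eq] by blast
  show ?thesis by (rule that[OF S f(1,2)]) (use f(3) in simp)
qed

theorem theorem7p5:
  fixes n :: nat and E :: "'e set" and ends :: "'e \<Rightarrow> nat \<times> nat" and phi :: "'e \<Rightarrow> real"
    and Q :: "nat \<Rightarrow> 'a::euclidean_space"
  assumes "gain_graph n E ends"
    and "DIM('a) < n - 1"
    and "DIM('b::euclidean_space) = n - 1"
    and "affine hull (Q ` {1..n}) = UNIV"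
    and "\<And>i j. i \<in> {1..n} \<Longrightarrow> j \<in> {1..n} \<Longrightarrow> adjacent E ends i j \<Longrightarrow> Q i \<noteq> Q j"
  shows "\<exists>(Q' :: nat \<Rightarrow> 'b) (t :: 'b set) (f :: 'a \<Rightarrow> 'b).
           inj_on Q' {1..n} \<and> \<not> affine_dependent (Q' ` {1..n}) \<and>
           affine t \<and> aff_dim t = int DIM('a) \<and>
           (\<forall>x y. dist (f x) (f y) = dist x y) \<and> f ` UNIV = t \<and>
           (\<lambda>h. f ` h) ` gain_arrangement E ends phi Q
             = restrict_arr (gain_arrangement E ends phi Q') t"
proof -
  obtain f :: "'a \<Rightarrow> 'b" and S where S: "S \<subseteq> Basis" "card S = DIM('a)"
    and f: "linear f" "range f = span S" "\<And>x. norm (f x) = norm x"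
    using isometry_onto_coordinate_subspace[where 'b = 'b] assms(2,3) by (metis less_imp_le)
  have "inj f" using f(1,3) by (metis linear_inj_iff_eq_0 norm_eq_zero)
  then have aff: "aff_dim ((f \<circ> Q) ` {1..n}) = int (card S)"
    using f(1) S(2) assms(4)
    by (metis aff_dim_UNIV aff_dim_affine_hull aff_dim_injective_linear_image image_comp)
  have card: "card {1..n} = DIM('b) + 1" "card S < DIM('b)" using S(2) assms(2,3) by simp_all
  have "(f \<circ> Q) ` {1..n} \<subseteq> span S" using f(2) by auto
  then obtain w where w: "\<And>i. norm (w i) = 1" "\<And>i y. y \<in> span S \<Longrightarrow> y \<bullet> w i = 0"
      "affinely_independent_family {1..n} (\<lambda>i. (f \<circ> Q) i + w i)"
    using exists_affinely_independent_orthogonal_lift[OF finite_atLeastAtMost card(1) S(1) card(2)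
        _ aff] by blast
  define Q' where "Q' = (\<lambda>i. f (Q i) + w i)"
  have "f x \<bullet> w k = 0" for x k using w(2) f(2) by blast
  then have psi_f: "psi Q' i j (f x) = psi Q i j x" for i j x
    unfolding Q'_def using psi_orthogonal_lift[OF f(1,3)] w(1) by simp
  have "\<forall>e\<in>E. Q (fst (ends e)) \<noteq> Q (snd (ends e))"
    using assms(1,5) unfolding gain_graph_def adjacent_def by (metis prod.collapse)
  then have "(\<lambda>h. f ` h) ` gain_arrangement E ends phi Q
      = restrict_arr (gain_arrangement E ends phi Q') (range f)"
    using psi_f by (intro gain_arrangement_image_eq_restrict_arr) auto
  moreover have "inj_on Q' {1..n} \<and> \<not> affine_dependent (Q' ` {1..n})"
    using w(3) affinely_independent_family_iff[of "{1..n}" Q'] by (simp add: Q'_def)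
  moreover have "affine (range f)" "aff_dim (range f) = int DIM('a)"
    using f(2) S independent_mono[OF independent_Basis S(1)]
    by (simp_all add: subspace_imp_affine aff_dim_subspace dim_eq_card_independent)
  moreover have "\<forall>x y. dist (f x) (f y) = dist x y"
    using f(1,3) by (simp add: dist_norm linear_diff[symmetric])
  ultimately show ?thesis by blast
qed

end
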